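(* Let $T\in\{0,1\}^{\mathbb N}$ and let $\widetilde x_0=(x_0,x_1,\dots)\in\widetilde X_T$ be such that $x_n=0$ for some $n\in\mathbb N$, so that $\widetilde x_0=(f^n(0),f^{n-1}(0),\dots,f(0),0,\dots)$ and $T(n)=0$. Let $T'\in\{0,1\}^{\mathbb N}$ satisfy $T'(k)=T(k)$ for $k\ne n$ and $T'(n)=1$. Then every neighborhood of $\widetilde x_0$ in $\widetilde X$ contains, for some $\varepsilon>0$, the set $$\{\widetilde x=(x_0',x_1',\dots)\in\widetilde X_{T'}:\ x_0'\in(f^n(0)-\varepsilon,f^n(0)+\varepsilon)\}.$$
   Context: Standing setup. Fix real numbers $\rho,\delta,\gamma,\alpha$ with $0<\rho<1$, $\delta>0$, $\gamma>-\delta/\rho$, $-\delta/\rho<\alpha<0$. Define $f:[0,1]\to[0,1]$ by $f(x)=f_0(x):=\frac{\alpha x-\alpha\rho}{\gamma x+\delta}$ for $x\in[0,\rho]$ and $f(x)=f_1(x):=\frac{x-\rho}{1-\rho}$ for $x\in(\rho,1]$. Put $\rho_1:=f_0(0)$. Then $f_0$ is a decreasing bijection $[0,\rho]\to[0,\rho_1]$ and $f_1$ is an increasing bijection $(\rho,1]\to(0,1]$; write $f_0^{-1}:[0,\rho_1]\to[0,\rho]$ and $f_1^{-1}:(0,1]\to(\rho,1]$. The inverse limit is $\widetilde X=\{(x_0,x_1,\dots)\in[0,1]^{\mathbb N}: f(x_{n+1})=x_n \ \forall n\}$ with the product topology. A point $\widetilde x=(x_0,x_1,\dots)\in\widetilde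 X$ is of type $T\in\{0,1\}^{\mathbb N}$ if $x_{n+1}=f_{T(n)}^{-1}(x_n)$ for all $n$ (i.e. $x_{n+1}\in[0,\rho]$ when $T(n)=0$ and $x_{n+1}\in(\rho,1]$ when $T(n)=1$); $\widetilde X_T$ denotes the set of points of type $T$. *)

theory Defs
  imports "HOL-Analysis.Analysis"
begin

definition f0 :: "real \<Rightarrow> real \<Rightarrow> real \<Rightarrow> real \<Rightarrow> real \<Rightarrow> real" where
  "f0 \<rho> \<delta> \<gamma> \<alpha> x = (\<alpha> * x - \<alpha> * \<rho>) / (\<gamma> * x + \<delta>)"

definition f1 :: "real \<Rightarrow> real \<Rightarrow> real" where
  "f1 \<rho> x = (x - \<rho>) / (1 - \<rho>)"

definition fmap :: "real \<Rightarrow> real \<Rightarrow> real \<Rightarrow> real \<Rightarrow> real \<Rightarrow> real" where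
  "fmap \<rho> \<delta> \<gamma> \<alpha> x = (if x \<le> \<rho> then f0 \<rho> \<delta> \<gamma> \<alpha> x else f1 \<rho> x)"

text \<open>The inverse limit: sequences in [0,1] with f(x (n+1)) = x n.
  Its topology is the product topology on nat => real (Function_Topology).\<close>

definition Xtilde :: "real \<Rightarrow> real \<Rightarrow> real \<Rightarrow> real \<Rightarrow> (nat \<Rightarrow> real) set" where
  "Xtilde \<rho> \<delta> \<gamma> \<alpha> =
     {x. (\<forall>k. x k \<in> {0..1}) \<and> (\<forall>k. fmap \<rho> \<delta> \<gamma> \<alpha> (x (Suc k)) = x k)}"

definition Xtype :: "real \<Rightarrow> real \<Rightarrow> real \<Rightarrow> real \<Rightarrow> (nat \<Rightarrow> nat) \<Rightarrow> (nat \<Rightarrow> real) set" where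
  "Xtype \<rho> \<delta> \<gamma> \<alpha> T =
     {x \<in> Xtilde \<rho> \<delta> \<gamma> \<alpha>.
        \<forall>k. (T k = 0 \<longrightarrow> x (Suc k) \<in> {0..\<rho>}) \<and> (T k = 1 \<longrightarrow> x (Suc k) \<in> {\<rho><..1})}"

end

theory Submission
  imports Defs
begin

text \<open>Since f(x_(n+1)) = x_n = 0 forces x_(n+1) = \<rho>, which lies in both closed branches
  [0,\<rho>] and [\<rho>,1], a point y of type T' has y_k and x_k in a common branch for every k.
  On each closed branch f has a Lipschitz inverse, with constant K say, so
  |y_k - x_k| \<le> K^k |y_0 - x_0|. A basic open set of the product topology constrains only
  finitely many coordinates, so a small enough bound on |y_0 - x_0| puts y into it.\<close>

lemma open_fun_contains_box:
  fixes W :: "('a \<Rightarrow> real) set"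
  assumes "open W" "x \<in> W"
  obtains F e where "finite F" "e > 0" "\<And>y. \<forall>i\<in>F. \<bar>y i - x i\<bar> < e \<Longrightarrow> y \<in> W"
proof -
  have "openin (product_topology (\<lambda>i. euclidean) UNIV) W"
    using assms(1) unfolding open_fun_def by simp
  from product_topology_open_contains_basis[OF this assms(2)]
  obtain X where X: "x \<in> (\<Pi>\<^sub>E i\<in>UNIV. X i)" "\<And>i. open (X i)" "finite {i. X i \<noteq> UNIV}"
    "(\<Pi>\<^sub>E i\<in>UNIV. X i) \<subseteq> W"
    by auto
  define F where "F = {i. X i \<noteq> UNIV}"
  have "\<forall>i. \<exists>e>0. ball (x i) e \<subseteq> X i"
    using X(1,2) by (meson PiE_E UNIV_I open_contains_ball)
  then obtain r where r: "\<And>i. r i > 0" "\<And>i. ball (x i) (r i) \<subseteq> X i"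
    by metis
  define e where "e = Min (insert 1 (r ` F))"
  have "finite F"
    using X(3) by (simp add: F_def)
  then have "e > 0" and e_le: "\<And>i. i \<in> F \<Longrightarrow> e \<le> r i"
    unfolding e_def using r(1) by auto
  show thesis
  proof (rule that[OF \<open>finite F\<close> \<open>e > 0\<close>])
    fix y assume y: "\<forall>i\<in>F. \<bar>y i - x i\<bar> < e"
    have "y i \<in> X i" for i
    proof (cases "i \<in> F")
      case True
      with y e_le have "y i \<in> ball (x i) (r i)"
        by (fastforce simp: dist_real_def abs_minus_commute)
      then show ?thesis using r(2) by blast
    qed (simp add: F_def)
    then show "y \<in> W"
      using X(4) by (auto simp: PiE_iff)
  qed
qed

lemma open_fun_contains_controlled_nbhd:
  fixes W :: "('a \<Rightarrow> real) set" and C :: "'a \<Rightarrow> real"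
  assumes "open W" "x \<in> W"
  obtains \<epsilon> where "\<epsilon> > 0"
    "\<And>y. \<bar>y i0 - x i0\<bar> < \<epsilon> \<Longrightarrow> \<forall>i. \<bar>y i - x i\<bar> \<le> C i * \<bar>y i0 - x i0\<bar> \<Longrightarrow> y \<in> W"
proof -
  obtain F e where F: "finite F" and "e > 0"
    and box: "\<And>y. \<forall>i\<in>F. \<bar>y i - x i\<bar> < e \<Longrightarrow> y \<in> W"
    using open_fun_contains_box[OF assms] by blast
  define M where "M = Max (insert 1 ((\<lambda>i. \<bar>C i\<bar>) ` F))"
  have "M \<ge> 1" and C_le: "\<And>i. i \<in> F \<Longrightarrow> \<bar>C i\<bar> \<le> M"
    unfolding M_def using F by auto
  show thesis
  proof (rule that)
    show "e / M > 0"
      using \<open>e > 0\<close> \<open>M \<ge> 1\<close> by simp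
    fix y
    assume close: "\<bar>y i0 - x i0\<bar> < e / M" and controlled: "\<forall>i. \<bar>y i - x i\<bar> \<le> C i * \<bar>y i0 - x i0\<bar>"
    have "\<bar>y i - x i\<bar> < e" if "i \<in> F" for i
    proof -
      have "\<bar>y i - x i\<bar> \<le> \<bar>C i\<bar> * \<bar>y i0 - x i0\<bar>"
        using controlled by (meson abs_ge_self abs_ge_zero mult_right_mono order_trans)
      also have "\<dots> \<le> M * \<bar>y i0 - x i0\<bar>"
        using C_le[OF that] by (simp add: mult_right_mono)
      also have "\<dots> < M * (e / M)"
        using \<open>M \<ge> 1\<close> by (intro mult_strict_left_mono[OF close]) simp
      finally show ?thesis
        using \<open>M \<ge> 1\<close> by simp
    qed
    then show "y \<in> W"
      by (simp add: box)
  qed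
qed

lemma funpow_backward_orbit:
  assumes "\<And>k. f (x (Suc k)) = x k"
  shows "(f ^^ k) (x k) = x 0"
proof (induction k)
  case (Suc k)
  have "(f ^^ Suc k) (x (Suc k)) = (f ^^ k) (f (x (Suc k)))"
    by (simp only: funpow_Suc_right o_apply)
  with Suc assms show ?case by simp
qed simp

lemma abs_diff_le_geometric:
  fixes x y :: "nat \<Rightarrow> real"
  assumes "K \<ge> 0" "\<And>k. \<bar>y (Suc k) - x (Suc k)\<bar> \<le> K * \<bar>y k - x k\<bar>"
  shows "\<bar>y k - x k\<bar> \<le> K ^ k * \<bar>y 0 - x 0\<bar>"
proof (induction k)
  case (Suc k)
  have "\<bar>y (Suc k) - x (Suc k)\<bar> \<le> K * \<bar>y k - x k\<bar>"
    by (rule assms(2))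
  also have "\<dots> \<le> K * (K ^ k * \<bar>y 0 - x 0\<bar>)"
    using Suc assms(1) by (rule mult_left_mono)
  finally show ?case by simp
qed simp

lemma f0_denominator_pos:
  fixes \<rho> \<delta> \<gamma> a :: real
  assumes "0 < \<rho>" "0 < \<delta>" "- \<delta> / \<rho> < \<gamma>" "a \<in> {0..\<rho>}"
  shows "\<gamma> * a + \<delta> > 0"
proof (cases "\<gamma> \<ge> 0")
  case True
  with assms show ?thesis by (simp add: add_nonneg_pos)
next
  case False
  then have "\<gamma> * \<rho> \<le> \<gamma> * a"
    using assms(4) by (simp add: mult_left_mono_neg)
  moreover have "- \<delta> < \<gamma> * \<rho>"
    using mult_strict_right_mono[OF assms(3,1)] assms(1) by simp
  ultimately show ?thesis by linarith
qed

lemma f0_diff: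
  assumes "\<gamma> * a + \<delta> \<noteq> 0" "\<gamma> * b + \<delta> \<noteq> 0"
  shows "f0 \<rho> \<delta> \<gamma> \<alpha> a - f0 \<rho> \<delta> \<gamma> \<alpha> b
    = \<alpha> * (\<delta> + \<rho> * \<gamma>) * (a - b) / ((\<gamma> * a + \<delta>) * (\<gamma> * b + \<delta>))"
  using assms unfolding f0_def by (simp add: field_simps)

lemma f0_inverse_Lipschitz:
  fixes \<rho> \<delta> \<gamma> \<alpha> :: real
  assumes "0 < \<rho>" "0 < \<delta>" "- \<delta> / \<rho> < \<gamma>" "\<alpha> \<noteq> 0"
  obtains K where "K > 0"
    "\<And>a b. a \<in> {0..\<rho>} \<Longrightarrow> b \<in> {0..\<rho>} \<Longrightarrow> \<bar>a - b\<bar> \<le> K * \<bar>f0 \<rho> \<delta> \<gamma> \<alpha> a - f0 \<rho> \<delta> \<gamma> \<alpha> b\<bar>"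
proof -
  define M where "M = max \<delta> (\<gamma> * \<rho> + \<delta>)"
  define c where "c = \<bar>\<alpha> * (\<delta> + \<rho> * \<gamma>)\<bar>"
  have "\<delta> + \<rho> * \<gamma> > 0"
    using f0_denominator_pos[OF assms(1-3), of \<rho>] assms(1) by (simp add: mult.commute)
  then have "c > 0"
    using assms(4) by (simp add: c_def)
  have den: "0 < \<gamma> * a + \<delta> \<and> \<gamma> * a + \<delta> \<le> M" if "a \<in> {0..\<rho>}" for a
  proof -
    have "\<gamma> * a \<le> max 0 (\<gamma> * \<rho>)"
      using that by (cases "\<gamma> \<ge> 0") (auto simp: mult_left_mono mult_nonpos_nonneg)
    then show ?thesis
      using f0_denominator_pos[OF assms(1-3) that] by (auto simp: M_def)
  qed
  show thesis
  proof (rule that)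
    show "M\<^sup>2 / c > 0"
      using den[of 0] assms(1) \<open>c > 0\<close> by simp
    fix a b assume ab: "a \<in> {0..\<rho>}" "b \<in> {0..\<rho>}"
    define p where "p = (\<gamma> * a + \<delta>) * (\<gamma> * b + \<delta>)"
    have "0 < p" "p \<le> M\<^sup>2"
      using den[OF ab(1)] den[OF ab(2)] unfolding p_def power2_eq_square
      by (auto intro: mult_mono)
    have "\<bar>f0 \<rho> \<delta> \<gamma> \<alpha> a - f0 \<rho> \<delta> \<gamma> \<alpha> b\<bar> = c * \<bar>a - b\<bar> / p"
      using den[OF ab(1)] den[OF ab(2)] \<open>0 < p\<close>
      by (simp add: f0_diff p_def c_def abs_mult abs_divide)
    then have "\<bar>a - b\<bar> = p / c * \<bar>f0 \<rho> \<delta> \<gamma> \<alpha> a - f0 \<rho> \<delta> \<gamma> \<alpha> b\<bar>"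
      using \<open>c > 0\<close> \<open>0 < p\<close> by simp
    also have "\<dots> \<le> M\<^sup>2 / c * \<bar>f0 \<rho> \<delta> \<gamma> \<alpha> a - f0 \<rho> \<delta> \<gamma> \<alpha> b\<bar>"
      using \<open>p \<le> M\<^sup>2\<close> \<open>c > 0\<close> by (intro mult_right_mono divide_right_mono) auto
    finally show "\<bar>a - b\<bar> \<le> M\<^sup>2 / c * \<bar>f0 \<rho> \<delta> \<gamma> \<alpha> a - f0 \<rho> \<delta> \<gamma> \<alpha> b\<bar>" .
  qed
qed

lemma f1_expanding:
  fixes \<rho> :: real
  assumes "0 < \<rho>" "\<rho> < 1"
  shows "\<bar>a - b\<bar> \<le> \<bar>f1 \<rho> a - f1 \<rho> b\<bar>"
proof -
  have "\<bar>f1 \<rho> a - f1 \<rho> b\<bar> = \<bar>a - b\<bar> / (1 - \<rho>)"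
    using assms(2) by (simp add: f1_def diff_divide_distrib[symmetric])
  then show ?thesis
    using assms by (simp add: le_divide_eq mult_left_le)
qed

text \<open>At a = \<rho> the map uses f0, but both branches vanish there.\<close>

lemma fmap_eq_f1:
  assumes "\<rho> \<le> a"
  shows "fmap \<rho> \<delta> \<gamma> \<alpha> a = f1 \<rho> a"
  using assms by (auto simp: fmap_def f0_def f1_def)

definition common_branch :: "real \<Rightarrow> real \<Rightarrow> real \<Rightarrow> bool" where
  "common_branch \<rho> a b \<longleftrightarrow> a \<in> {0..\<rho>} \<and> b \<in> {0..\<rho>} \<or> a \<in> {\<rho>..1} \<and> b \<in> {\<rho>..1}"

lemma fmap_inverse_Lipschitz_on_branches:
  fixes \<rho> \<delta> \<gamma> \<alpha> :: real
  assumes "0 < \<rho>" "\<rho> < 1" "0 < \<delta>" "- \<delta> / \<rho> < \<gamma>" "\<alpha> \<noteq> 0"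
  obtains K where "K > 0"
    "\<And>a b. common_branch \<rho> a b \<Longrightarrow> \<bar>a - b\<bar> \<le> K * \<bar>fmap \<rho> \<delta> \<gamma> \<alpha> a - fmap \<rho> \<delta> \<gamma> \<alpha> b\<bar>"
proof -
  obtain K0 where "K0 > 0" and K0:
    "\<And>a b. a \<in> {0..\<rho>} \<Longrightarrow> b \<in> {0..\<rho>} \<Longrightarrow> \<bar>a - b\<bar> \<le> K0 * \<bar>f0 \<rho> \<delta> \<gamma> \<alpha> a - f0 \<rho> \<delta> \<gamma> \<alpha> b\<bar>"
    using f0_inverse_Lipschitz[OF assms(1,3-5)] by blast
  show thesis
  proof (rule that[of "max 1 K0"])
    fix a b
    let ?D = "\<bar>fmap \<rho> \<delta> \<gamma> \<alpha> a - fmap \<rho> \<delta> \<gamma> \<alpha> b\<bar>"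
    assume "common_branch \<rho> a b"
    then consider "a \<in> {0..\<rho>}" "b \<in> {0..\<rho>}" | "a \<in> {\<rho>..1}" "b \<in> {\<rho>..1}"
      unfolding common_branch_def by blast
    then have "\<bar>a - b\<bar> \<le> K0 * ?D \<or> \<bar>a - b\<bar> \<le> ?D"
    proof cases
      case 1
      then show ?thesis using K0[of a b] by (simp add: fmap_def)
    next
      case 2
      then show ?thesis using f1_expanding[OF assms(1,2), of a b] by (simp add: fmap_eq_f1)
    qed
    moreover have "K0 * ?D \<le> max 1 K0 * ?D" "1 * ?D \<le> max 1 K0 * ?D"
      by (intro mult_right_mono; simp)+
    ultimately show "\<bar>a - b\<bar> \<le> max 1 K0 * ?D"
      by (metis mult_1 order.trans)
  qed simp
qed

lemma fmap_eq_zero_iff: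
  fixes \<rho> \<delta> \<gamma> \<alpha> :: real
  assumes "0 < \<rho>" "\<rho> < 1" "0 < \<delta>" "- \<delta> / \<rho> < \<gamma>" "\<alpha> \<noteq> 0" "a \<in> {0..1}"
  shows "fmap \<rho> \<delta> \<gamma> \<alpha> a = 0 \<longleftrightarrow> a = \<rho>"
proof (cases "a \<le> \<rho>")
  case True
  then have "\<gamma> * a + \<delta> > 0"
    using f0_denominator_pos[OF assms(1,3,4)] assms(6) by simp
  with True assms(5) show ?thesis
    by (simp add: fmap_def f0_def right_diff_distrib[symmetric])
next
  case False
  with assms(2) show ?thesis by (simp add: fmap_def f1_def)
qed

lemma Xtilde_diff_le_geometric:
  fixes \<rho> \<delta> \<gamma> \<alpha> :: real
  assumes "0 < \<rho>" "\<rho> < 1" "0 < \<delta>" "- \<delta> / \<rho> < \<gamma>" "\<alpha> \<noteq> 0"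
  obtains K where "K > 0"
    "\<And>x y k. x \<in> Xtilde \<rho> \<delta> \<gamma> \<alpha> \<Longrightarrow> y \<in> Xtilde \<rho> \<delta> \<gamma> \<alpha> \<Longrightarrow>
       \<forall>k. common_branch \<rho> (y (Suc k)) (x (Suc k)) \<Longrightarrow> \<bar>y k - x k\<bar> \<le> K ^ k * \<bar>y 0 - x 0\<bar>"
proof -
  obtain K where "K > 0" and K:
    "\<And>a b. common_branch \<rho> a b \<Longrightarrow> \<bar>a - b\<bar> \<le> K * \<bar>fmap \<rho> \<delta> \<gamma> \<alpha> a - fmap \<rho> \<delta> \<gamma> \<alpha> b\<bar>"
    using fmap_inverse_Lipschitz_on_branches[OF assms] by blast
  show thesis
  proof (rule that[OF \<open>K > 0\<close>])
    fix x y k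
    assume "x \<in> Xtilde \<rho> \<delta> \<gamma> \<alpha>" "y \<in> Xtilde \<rho> \<delta> \<gamma> \<alpha>"
      and branch: "\<forall>k. common_branch \<rho> (y (Suc k)) (x (Suc k))"
    then have x_orbit: "\<And>k. fmap \<rho> \<delta> \<gamma> \<alpha> (x (Suc k)) = x k"
      and y_orbit: "\<And>k. fmap \<rho> \<delta> \<gamma> \<alpha> (y (Suc k)) = y k"
      by (simp_all add: Xtilde_def)
    have "\<bar>y (Suc k) - x (Suc k)\<bar> \<le> K * \<bar>y k - x k\<bar>" for k
      using K[OF branch[rule_format, of k]] by (simp only: x_orbit y_orbit)
    with \<open>K > 0\<close> show "\<bar>y k - x k\<bar> \<le> K ^ k * \<bar>y 0 - x 0\<bar>"
      by (intro abs_diff_le_geometric) auto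
  qed
qed

lemma Xtype_common_branch:
  assumes "\<forall>k. T k \<in> {0, 1}" "x \<in> Xtype \<rho> \<delta> \<gamma> \<alpha> T" "y \<in> Xtype \<rho> \<delta> \<gamma> \<alpha> T'"
    and "x (Suc n) = \<rho>" "\<forall>k. k \<noteq> n \<longrightarrow> T' k = T k" "T' n = 1"
  shows "common_branch \<rho> (y (Suc k)) (x (Suc k))"
proof (cases "k = n")
  case True
  have "x (Suc n) \<le> 1"
    using assms(2) by (simp add: Xtype_def Xtilde_def)
  with True assms(3,4,6) show ?thesis
    by (auto simp: Xtype_def common_branch_def)
next
  case False
  with assms(1,5) have "T' k = T k" "T k = 0 \<or> T k = 1"
    by auto
  with assms(2,3) show ?thesis
    by (auto simp: Xtype_def common_branch_def)
qed

theorem lemma3: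
  fixes \<rho> \<delta> \<gamma> \<alpha> :: real
    and T T' :: "nat \<Rightarrow> nat" and x :: "nat \<Rightarrow> real" and n :: nat
    and N :: "(nat \<Rightarrow> real) set"
  assumes "0 < \<rho>" "\<rho> < 1" "\<delta> > 0" "\<gamma> > - \<delta> / \<rho>" "- \<delta> / \<rho> < \<alpha>" "\<alpha> < 0"
    and "\<forall>k. T k \<in> {0, 1}"
    and "x \<in> Xtype \<rho> \<delta> \<gamma> \<alpha> T"
    and "x n = 0"
    and "\<forall>k. k \<noteq> n \<longrightarrow> T' k = T k"
    and "T' n = 1"
    and "\<exists>W. open W \<and> x \<in> W \<and> W \<inter> Xtilde \<rho> \<delta> \<gamma> \<alpha> \<subseteq> N"
  shows "\<exists>\<epsilon>>0. {y \<in> Xtype \<rho> \<delta> \<gamma> \<alpha> T'.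
            y 0 \<in> {(fmap \<rho> \<delta> \<gamma> \<alpha> ^^ n) 0 - \<epsilon> <..< (fmap \<rho> \<delta> \<gamma> \<alpha> ^^ n) 0 + \<epsilon>}} \<subseteq> N"
proof -
  obtain W where W: "open W" "x \<in> W" "W \<inter> Xtilde \<rho> \<delta> \<gamma> \<alpha> \<subseteq> N"
    using assms(12) by blast
  obtain K where "K > 0" and K: "\<And>x y k. x \<in> Xtilde \<rho> \<delta> \<gamma> \<alpha> \<Longrightarrow> y \<in> Xtilde \<rho> \<delta> \<gamma> \<alpha> \<Longrightarrow>
       \<forall>k. common_branch \<rho> (y (Suc k)) (x (Suc k)) \<Longrightarrow> \<bar>y k - x k\<bar> \<le> K ^ k * \<bar>y 0 - x 0\<bar>"
    using Xtilde_diff_le_geometric[OF assms(1-4) less_imp_neq[OF assms(6)]] by blast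
  have x_orbit: "\<And>k. fmap \<rho> \<delta> \<gamma> \<alpha> (x (Suc k)) = x k" "\<And>k. x k \<in> {0..1}"
    using assms(8) by (auto simp: Xtype_def Xtilde_def)
  have "x (Suc n) = \<rho>"
    using fmap_eq_zero_iff[OF assms(1-4) _ x_orbit(2)] x_orbit(1)[of n] assms(6,9) by simp
  have x0: "(fmap \<rho> \<delta> \<gamma> \<alpha> ^^ n) 0 = x 0"
    using funpow_backward_orbit[of "fmap \<rho> \<delta> \<gamma> \<alpha>" x n, OF x_orbit(1)] assms(9) by simp
  obtain \<epsilon> where "\<epsilon> > 0" and \<epsilon>:
    "\<And>y. \<bar>y 0 - x 0\<bar> < \<epsilon> \<Longrightarrow> \<forall>k. \<bar>y k - x k\<bar> \<le> K ^ k * \<bar>y 0 - x 0\<bar> \<Longrightarrow> y \<in> W"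
    using open_fun_contains_controlled_nbhd[OF W(1,2), of 0 "\<lambda>k. K ^ k"] by blast
  show ?thesis
  proof (intro exI conjI subsetI)
    fix y
    assume "y \<in> {y \<in> Xtype \<rho> \<delta> \<gamma> \<alpha> T'.
      y 0 \<in> {(fmap \<rho> \<delta> \<gamma> \<alpha> ^^ n) 0 - \<epsilon> <..< (fmap \<rho> \<delta> \<gamma> \<alpha> ^^ n) 0 + \<epsilon>}}"
    then have y: "y \<in> Xtype \<rho> \<delta> \<gamma> \<alpha> T'" "\<bar>y 0 - x 0\<bar> < \<epsilon>"
      by (auto simp: x0 abs_diff_less_iff)
    have "\<forall>k. common_branch \<rho> (y (Suc k)) (x (Suc k))"
      using Xtype_common_branch[OF assms(7,8) y(1) \<open>x (Suc n) = \<rho>\<close> assms(10,11)] by blast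
    with assms(8) y(1) have "\<forall>k. \<bar>y k - x k\<bar> \<le> K ^ k * \<bar>y 0 - x 0\<bar>"
      by (auto intro: K simp: Xtype_def)
    with W(3) y(1) \<epsilon>[of y, OF y(2)] show "y \<in> N"
      by (auto simp: Xtype_def)
  qed (rule \<open>\<epsilon> > 0\<close>)
qed

end
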